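(* Let $G$ and $H$ be connected bipartite circulant graphs on $2n$ and $2m$ vertices respectively, where $\gcd(n,m) = 1$. Then $G \otimes H$ is a circulant graph.
   Context: Graphs have no multiple edges but may have loops. The tensor product $G \otimes H$ of graphs $G$ and $H$ has vertex set $V(G)\times V(H)$, with $(g,h)$ adjacent to $(g',h')$ if and only if $g$ is adjacent to $g'$ in $G$ and $h$ is adjacent to $h'$ in $H$. For an integer $N\ge 1$ and a set $S$ of integers, the circulant graph $C_NS$ has vertex set $\{0,\dots,N-1\}$, with $i$ adjacent to $j$ iff $i-j \equiv \pm s \pmod N$ for some $s\in S$; a graph is circulant if it is isomorphic to some $C_NS$ (this includes disconnected graphs); equivalently, if it has an automorphism that permutes all its vertices in a single cycle. *)

theory Defs
  imports "HOL-Number_Theory.Cong"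
begin

definition graph :: "'a set \<Rightarrow> ('a \<Rightarrow> 'a \<Rightarrow> bool) \<Rightarrow> bool" where
  "graph V adj \<longleftrightarrow> finite V \<and> (\<forall>u v. adj u v \<longrightarrow> u \<in> V \<and> v \<in> V)
     \<and> (\<forall>u v. adj u v \<longrightarrow> adj v u)"

definition connected_graph :: "'a set \<Rightarrow> ('a \<Rightarrow> 'a \<Rightarrow> bool) \<Rightarrow> bool" where
  "connected_graph V adj \<longleftrightarrow> (\<forall>u\<in>V. \<forall>v\<in>V. adj\<^sup>*\<^sup>* u v)"

definition bipartite :: "'a set \<Rightarrow> ('a \<Rightarrow> 'a \<Rightarrow> bool) \<Rightarrow> bool" where
  "bipartite V adj \<longleftrightarrow> (\<exists>A B. V = A \<union> B \<and> A \<inter> B = {} \<and>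
     (\<forall>u v. adj u v \<longrightarrow> (u \<in> A \<and> v \<in> B) \<or> (u \<in> B \<and> v \<in> A)))"

definition circ_adj :: "nat \<Rightarrow> int set \<Rightarrow> nat \<Rightarrow> nat \<Rightarrow> bool" where
  "circ_adj N S i j \<longleftrightarrow> i < N \<and> j < N \<and>
     (\<exists>s\<in>S. [int i - int j = s] (mod int N) \<or> [int i - int j = - s] (mod int N))"

definition circulant :: "'a set \<Rightarrow> ('a \<Rightarrow> 'a \<Rightarrow> bool) \<Rightarrow> bool" where
  "circulant V adj \<longleftrightarrow> (\<exists>N S f. bij_betw f V {0..<N} \<and>
     (\<forall>u\<in>V. \<forall>v\<in>V. adj u v \<longleftrightarrow> circ_adj N S (f u) (f v)))"

definition tensor_adj :: "('a \<Rightarrow> 'a \<Rightarrow> bool) \<Rightarrow> ('b \<Rightarrow> 'b \<Rightarrow> bool) \<Rightarrow>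
    'a \<times> 'b \<Rightarrow> 'a \<times> 'b \<Rightarrow> bool" where
  "tensor_adj adjG adjH x y \<longleftrightarrow> adjG (fst x) (fst y) \<and> adjH (snd x) (snd y)"

end

(*
  Write G as C_2n S and H as C_2m T.  In a connected bipartite graph the 2-colouring is unique up
  to swapping the classes, so the rotation i \<mapsto> i + 1, being an automorphism, either fixes
  the colouring (impossible once there is an edge) or swaps it; hence every edge of C_2n S joins
  vertices of opposite parity, and likewise for C_2m T.

  Now walk through Z_2n \<times> Z_2m along the staircase (0,0), (1,0), (1,1), (2,1), (2,2), ...,
  advancing the two coordinates alternately.  By coprimality of n and m the walk has period 4nm
  and visits every vertex exactly once.  The two ends of an edge of the tensor product sit at
  steps of equal parity, so one step of the walk moves both ends in the same coordinate and keeps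
  them adjacent: advancing along the walk is an automorphism of the tensor product that cycles
  through all its vertices.
*)
theory Submission
  imports Defs
begin

lemma circ_adj_sym: "circ_adj N S i j \<Longrightarrow> circ_adj N S j i"
  unfolding circ_adj_def by (metis cong_minus_minus_iff minus_diff_eq minus_minus)

lemma circ_adj_Suc_mod:
  assumes "circ_adj N S i j"
  shows "circ_adj N S (Suc i mod N) (Suc j mod N)"
proof -
  have "[int (Suc i mod N) - int (Suc j mod N) = int (Suc i) - int (Suc j)] (mod int N)"
    by (intro cong_diff) (simp_all add: cong_def zmod_int)
  then have "[int (Suc i mod N) - int (Suc j mod N) = int i - int j] (mod int N)"
    by simp
  with assms show ?thesis
    unfolding circ_adj_def by (metis cong_trans mod_less_divisor zero_less_iff_neq_zero not_less0)
qed

lemma shift_invariant_relation_eq_circ_adj: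
  fixes Q :: "nat \<Rightarrow> nat \<Rightarrow> bool"
  assumes sym: "\<And>k l. Q k l \<Longrightarrow> Q l k"
    and Suc: "\<And>k l. Q k l \<Longrightarrow> Q (Suc k) (Suc l)"
    and periodic: "\<And>k l. Q (k mod M) (l mod M) = Q k l"
    and "k < M" "l < M"
  shows "Q k l \<longleftrightarrow> circ_adj M {int j | j. Q 0 j} k l"
proof -
  have shift: "Q (k + r) (l + r)" if "Q k l" for k l r
    using that by (induction r) (simp_all add: Suc)
  have Q_diff: "Q k l \<longleftrightarrow> Q 0 ((l + (M - k)) mod M)" if "k < M" for k l
  proof
    assume "Q k l"
    then have "Q (k + (M - k)) (l + (M - k))" by (rule shift)
    then show "Q 0 ((l + (M - k)) mod M)"
      using periodic[of M] \<open>k < M\<close> by simp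
  next
    assume "Q 0 ((l + (M - k)) mod M)"
    then have "Q k ((l + (M - k)) mod M + k)" using shift[of 0 _ k] by simp
    moreover have "((l + (M - k)) mod M + k) mod M = l mod M"
      using \<open>k < M\<close> by (simp add: mod_simps)
    ultimately show "Q k l" using periodic[of k] by (metis mod_mod_trivial)
  qed
  have Q_cong: "Q k l \<longleftrightarrow> (\<exists>j. Q 0 j \<and> [int l - int k = int j] (mod int M))"
    if "k < M" for k l
  proof -
    have "[int l - int k = int j] (mod int M) \<longleftrightarrow> j mod M = (l + (M - k)) mod M" for j
    proof -
      have "int (l + (M - k)) = int l - int k + int M" using \<open>k < M\<close> by simp
      then have "[int l - int k = int (l + (M - k))] (mod int M)"
        unfolding cong_def by (metis mod_add_self2)
      then show ?thesis
        by (metis cong_def cong_int_iff cong_sym cong_trans)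
    qed
    then show ?thesis using Q_diff[OF that] periodic[of 0] by (metis mod_0)
  qed
  have "[int k - int l = - int j] (mod int M) \<longleftrightarrow> [int l - int k = int j] (mod int M)" for j
    by (metis cong_minus_minus_iff minus_diff_eq)
  then show ?thesis
    using Q_cong[of k l] Q_cong[of l k] sym \<open>k < M\<close> \<open>l < M\<close>
    unfolding circ_adj_def by blast
qed

lemma circulant_transfer:
  assumes "circulant W adj'" and "bij_betw h V W"
    and "\<forall>u\<in>V. \<forall>v\<in>V. adj u v \<longleftrightarrow> adj' (h u) (h v)"
  shows "circulant V adj"
proof -
  obtain N S f where f: "bij_betw f W {0..<N}"
    and iso: "\<forall>u\<in>W. \<forall>v\<in>W. adj' u v \<longleftrightarrow> circ_adj N S (f u) (f v)"
    using assms(1) unfolding circulant_def by blast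
  have "bij_betw (f \<circ> h) V {0..<N}" using assms(2) f by (rule bij_betw_trans)
  moreover have "\<forall>u\<in>V. \<forall>v\<in>V. adj u v \<longleftrightarrow> circ_adj N S ((f \<circ> h) u) ((f \<circ> h) v)"
    using assms(2,3) iso by (auto simp: bij_betw_def)
  ultimately show ?thesis unfolding circulant_def by (intro exI conjI)
qed

lemma circulant_if_cyclic_enumeration:
  assumes bij: "bij_betw \<phi> {0..<M} V"
    and periodic: "\<And>k. \<phi> (k mod M) = \<phi> k"
    and sym: "\<And>u v. adj u v \<Longrightarrow> adj v u"
    and rotation: "\<And>k l. adj (\<phi> k) (\<phi> l) \<Longrightarrow> adj (\<phi> (Suc k)) (\<phi> (Suc l))"
  shows "circulant V adj"
proof (rule circulant_transfer[OF _ bij_betw_inv_into[OF bij]])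
  let ?Q = "\<lambda>k l. adj (\<phi> k) (\<phi> l)"
  have "?Q (k mod M) (l mod M) = ?Q k l" for k l by (simp only: periodic)
  then have "?Q k l \<longleftrightarrow> circ_adj M {int j | j. ?Q 0 j} k l" if "k < M" "l < M" for k l
    using shift_invariant_relation_eq_circ_adj[of ?Q, OF sym rotation _ that] by blast
  then have "\<forall>k\<in>{0..<M}. \<forall>l\<in>{0..<M}. ?Q k l \<longleftrightarrow> circ_adj M {int j | j. ?Q 0 j} (id k) (id l)"
    by simp
  then show "circulant {0..<M} ?Q"
    unfolding circulant_def using bij_betw_id by blast
  show "\<forall>u\<in>V. \<forall>v\<in>V. adj u v \<longleftrightarrow> ?Q (inv_into {0..<M} \<phi> u) (inv_into {0..<M} \<phi> v)"
    using bij by (simp add: bij_betw_def f_inv_into_f)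
qed

lemma rotation_invariant_bipartite_edge_odd:
  fixes C :: "nat \<Rightarrow> nat \<Rightarrow> bool" and c :: "nat \<Rightarrow> bool"
  assumes dom: "\<And>i j. C i j \<Longrightarrow> i < N \<and> j < N"
    and coloring: "\<And>i j. C i j \<Longrightarrow> c i \<noteq> c j"
    and rotation: "\<And>i j. C i j \<Longrightarrow> C (Suc i mod N) (Suc j mod N)"
    and connected: "\<And>i j. i < N \<Longrightarrow> j < N \<Longrightarrow> C\<^sup>*\<^sup>* i j"
    and edge: "C i j"
  shows "odd (i + j)"
proof -
  \<comment> \<open>Whether the colouring changes from i to i + 1 is preserved along edges, hence constant.\<close>
  define flips where "flips i \<longleftrightarrow> c i \<noteq> c (Suc i mod N)" for i
  have "flips i = flips j" if "C\<^sup>*\<^sup>* i j" for i j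
    using that
  proof (induction rule: rtranclp_induct)
    case (step j k)
    then show ?case
      using coloring[OF step.hyps(2)] coloring[OF rotation[OF step.hyps(2)]]
      unfolding flips_def by blast
  qed simp
  then have flips_const: "flips i = flips 0" if "i < N" for i
    using connected[of i 0] that edge dom by auto
  have colors: "c i = (if flips 0 then c 0 = even i else c 0)" if "i < N" for i
    using that
  proof (induction i)
    case (Suc i)
    then show ?case using flips_const[of i] unfolding flips_def by auto
  qed simp
  show ?thesis
    using coloring[OF edge] colors[of i] colors[of j] dom[OF edge] by (auto split: if_splits)
qed

lemma bipartite_circulant_edge_odd:
  assumes "graph V adj" and "connected_graph V adj" and "bipartite V adj"
    and f: "bij_betw f V {0..<N}"
    and iso: "\<forall>u\<in>V. \<forall>v\<in>V. adj u v \<longleftrightarrow> circ_adj N S (f u) (f v)"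
    and "circ_adj N S i j"
  shows "odd (i + j)"
proof -
  obtain A B where "A \<inter> B = {}"
    and AB: "\<And>u v. adj u v \<Longrightarrow> (u \<in> A \<and> v \<in> B) \<or> (u \<in> B \<and> v \<in> A)"
    using \<open>bipartite V adj\<close> unfolding bipartite_def by blast
  define g where "g = inv_into V f"
  have g: "g i \<in> V" "f (g i) = i" if "i < N" for i
    using that f unfolding g_def bij_betw_def by (auto simp: f_inv_into_f inv_into_into)
  have dom: "circ_adj N S i j \<Longrightarrow> i < N \<and> j < N" for i j
    unfolding circ_adj_def by simp
  have edge: "circ_adj N S (f u) (f v)" if "adj u v" for u v
    using that iso \<open>graph V adj\<close> unfolding graph_def by blast
  have "(circ_adj N S)\<^sup>*\<^sup>* (f u) (f v)" if "adj\<^sup>*\<^sup>* u v" for u v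
    using that by (induction rule: rtranclp_induct) (auto intro: rtranclp.rtrancl_into_rtrancl edge)
  then have connected: "(circ_adj N S)\<^sup>*\<^sup>* i j" if "i < N" "j < N" for i j
    using \<open>connected_graph V adj\<close> g[OF that(1)] g[OF that(2)]
    unfolding connected_graph_def by metis
  have coloring: "(g i \<in> A) \<noteq> (g j \<in> A)" if "circ_adj N S i j" for i j
  proof -
    have "adj (g i) (g j)" using iso g dom[OF that] that by metis
    then show ?thesis using AB \<open>A \<inter> B = {}\<close> by blast
  qed
  show ?thesis
    by (rule rotation_invariant_bipartite_edge_odd[where c = "\<lambda>i. g i \<in> A",
          OF dom coloring circ_adj_Suc_mod connected \<open>circ_adj N S i j\<close>])
qed

definition staircase :: "nat \<Rightarrow> nat \<Rightarrow> nat \<Rightarrow> nat \<times> nat" where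
  "staircase n m k = (Suc k div 2 mod (2 * n), k div 2 mod (2 * m))"

lemma div_2_mod_eq: "a div 2 mod c = a mod (2 * c) div 2" for a c :: nat
  using mod_mult2_eq[of a 2 c] by simp

lemma staircase_mod: "staircase n m (k mod (4 * n * m)) = staircase n m k"
proof -
  have dvd: "4 * n dvd 4 * n * m" "4 * m dvd 4 * n * m"
    by simp_all
  have "Suc (k mod (4 * n * m)) mod (4 * n) = Suc (k mod (4 * n * m) mod (4 * n)) mod (4 * n)"
    by (rule mod_Suc_eq[symmetric])
  also have "\<dots> = Suc k mod (4 * n)"
    by (simp add: mod_mod_cancel[OF dvd(1)] mod_Suc_eq)
  finally show ?thesis
    unfolding staircase_def div_2_mod_eq by (simp add: mod_mod_cancel[OF dvd(2)])
qed

lemma staircase_Suc_even: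
  "even k \<Longrightarrow> staircase n m (Suc k) = (Suc (fst (staircase n m k)) mod (2 * n), snd (staircase n m k))"
  unfolding staircase_def by (auto simp: mod_Suc_eq elim!: evenE)

lemma staircase_Suc_odd:
  "odd k \<Longrightarrow> staircase n m (Suc k) = (fst (staircase n m k), Suc (snd (staircase n m k)) mod (2 * m))"
  unfolding staircase_def by (auto simp: mod_Suc_eq elim!: oddE)

lemma even_staircase: "even (fst (staircase n m k) + snd (staircase n m k)) \<longleftrightarrow> even k"
proof (cases "even k")
  case True
  then obtain a where "k = 2 * a" ..
  then show ?thesis unfolding staircase_def by (simp add: dvd_mod_iff)
next
  case False
  then obtain a where "k = 2 * a + 1" ..
  then show ?thesis unfolding staircase_def by (simp add: dvd_mod_iff)
qed

lemma inj_on_staircase: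
  assumes "coprime n m"
  shows "inj_on (staircase n m) {0..<4 * n * m}"
proof
  fix k l assume k: "k \<in> {0..<4 * n * m}" and l: "l \<in> {0..<4 * n * m}"
    and eq: "staircase n m k = staircase n m l"
  have "even k \<longleftrightarrow> even l"
    using even_staircase[of n m k] even_staircase[of n m l] eq by simp
  then have parity: "k mod 2 = l mod 2"
    by (simp add: mod2_eq_if)
  have half: "Suc x div 2 = x div 2 + x mod 2" for x :: nat
    by (cases "even x") (auto elim: evenE oddE)
  have "[Suc k div 2 = Suc l div 2] (mod 2 * n)" "[k div 2 = l div 2] (mod 2 * m)"
    using eq unfolding staircase_def cong_def by simp_all
  then have "[k div 2 = l div 2] (mod 2 * n)"
    unfolding half parity by (simp add: cong_add_rcancel_nat)
  then have "[k div 2 = l div 2] (mod lcm (2 * n) (2 * m))"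
    using \<open>[k div 2 = l div 2] (mod 2 * m)\<close> by (rule cong_cong_lcm_nat)
  moreover have "lcm (2 * n) (2 * m) = 2 * n * m"
    using assms by (simp add: lcm_mult_left lcm_coprime)
  ultimately have "[k div 2 = l div 2] (mod 2 * n * m)"
    by simp
  then have "k div 2 = l div 2"
    by (rule cong_less_modulus_unique_nat) (use k l in \<open>simp_all add: less_mult_imp_div_less\<close>)
  then show "k = l"
    using parity by (metis div_mult_mod_eq)
qed

lemma bij_betw_staircase:
  assumes "coprime n m"
  shows "bij_betw (staircase n m) {0..<4 * n * m} ({0..<2 * n} \<times> {0..<2 * m})"
proof -
  have "staircase n m ` {0..<4 * n * m} \<subseteq> {0..<2 * n} \<times> {0..<2 * m}"
    unfolding staircase_def by (auto intro!: mod_less_divisor gr0I)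
  moreover have "card (staircase n m ` {0..<4 * n * m}) = card ({0..<2 * n} \<times> {0..<2 * m})"
    using card_image[OF inj_on_staircase[OF assms]] by (simp add: card_cartesian_product)
  ultimately have "staircase n m ` {0..<4 * n * m} = {0..<2 * n} \<times> {0..<2 * m}"
    by (intro card_subset_eq) simp_all
  with inj_on_staircase[OF assms] show ?thesis
    unfolding bij_betw_def by blast
qed

lemma circulant_tensor_circ_adj:
  assumes "coprime n m"
    and odd_S: "\<And>i j. circ_adj (2 * n) S i j \<Longrightarrow> odd (i + j)"
    and odd_T: "\<And>i j. circ_adj (2 * m) T i j \<Longrightarrow> odd (i + j)"
  shows "circulant ({0..<2 * n} \<times> {0..<2 * m}) (tensor_adj (circ_adj (2 * n) S) (circ_adj (2 * m) T))"
proof (rule circulant_if_cyclic_enumeration[OF bij_betw_staircase[OF assms(1)]])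
  let ?adj = "tensor_adj (circ_adj (2 * n) S) (circ_adj (2 * m) T)"
  show "staircase n m (k mod (4 * n * m)) = staircase n m k" for k
    by (rule staircase_mod)
  show "?adj u v \<Longrightarrow> ?adj v u" for u v
    unfolding tensor_adj_def by (blast intro: circ_adj_sym)
  show "?adj (staircase n m (Suc k)) (staircase n m (Suc l))"
    if "?adj (staircase n m k) (staircase n m l)" for k l
  proof -
    obtain a b a' b' where k: "staircase n m k = (a, b)" and l: "staircase n m l = (a', b')"
      by fastforce
    with that have S: "circ_adj (2 * n) S a a'" and T: "circ_adj (2 * m) T b b'"
      unfolding tensor_adj_def by auto
    have "even k \<longleftrightarrow> even l"
      using even_staircase[of n m k] even_staircase[of n m l] odd_S[OF S] odd_T[OF T] k l
      by auto
    then consider "even k" "even l" | "odd k" "odd l"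
      by blast
    then show ?thesis
    proof cases
      case 1
      then show ?thesis
        using k l circ_adj_Suc_mod[OF S] T by (simp add: staircase_Suc_even tensor_adj_def)
    next
      case 2
      then show ?thesis
        using k l S circ_adj_Suc_mod[OF T] by (simp add: staircase_Suc_odd tensor_adj_def)
    qed
  qed
qed

theorem theorem10:
  fixes VG :: "'a set" and adjG :: "'a \<Rightarrow> 'a \<Rightarrow> bool"
    and VH :: "'b set" and adjH :: "'b \<Rightarrow> 'b \<Rightarrow> bool"
    and n m :: nat
  assumes "graph VG adjG" and "connected_graph VG adjG" and "bipartite VG adjG"
    and "circulant VG adjG" and "card VG = 2 * n"
    and "graph VH adjH" and "connected_graph VH adjH" and "bipartite VH adjH"
    and "circulant VH adjH" and "card VH = 2 * m"
    and "gcd n m = 1"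
  shows "circulant (VG \<times> VH) (tensor_adj adjG adjH)"
proof -
  obtain N S f where f: "bij_betw f VG {0..<N}"
    and iso_G: "\<forall>u\<in>VG. \<forall>v\<in>VG. adjG u v \<longleftrightarrow> circ_adj N S (f u) (f v)"
    using \<open>circulant VG adjG\<close> unfolding circulant_def by blast
  obtain K T g where g: "bij_betw g VH {0..<K}"
    and iso_H: "\<forall>u\<in>VH. \<forall>v\<in>VH. adjH u v \<longleftrightarrow> circ_adj K T (g u) (g v)"
    using \<open>circulant VH adjH\<close> unfolding circulant_def by blast
  have N: "N = 2 * n" and K: "K = 2 * m"
    using bij_betw_same_card[OF f] bij_betw_same_card[OF g] assms(5,10) by simp_all
  have odd_S: "odd (i + j)" if "circ_adj (2 * n) S i j" for i j
    using bipartite_circulant_edge_odd[OF assms(1-3) f iso_G] that N by simp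
  have odd_T: "odd (i + j)" if "circ_adj (2 * m) T i j" for i j
    using bipartite_circulant_edge_odd[OF assms(6-8) g iso_H] that K by simp
  have "coprime n m"
    using \<open>gcd n m = 1\<close> by (simp add: coprime_iff_gcd_eq_1)
  then have "circulant ({0..<N} \<times> {0..<K}) (tensor_adj (circ_adj N S) (circ_adj K T))"
    unfolding N K using odd_S odd_T by (rule circulant_tensor_circ_adj)
  moreover have "bij_betw (map_prod f g) (VG \<times> VH) ({0..<N} \<times> {0..<K})"
    using f g by (rule bij_betw_map_prod)
  ultimately show ?thesis
    by (rule circulant_transfer) (use iso_G iso_H in \<open>auto simp: tensor_adj_def\<close>)
qed

end
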